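(* Let $T_n$ be the transitive tournament on $n$ vertices. Its characteristic polynomial is $$\phi(T_n,t)=\det(tI-H(T_n))=\sum_{j=0}^{\lfloor n/2\rfloor}(-1)^j\binom{n}{2j}t^{n-2j}=\tfrac12(t+i)^n+\tfrac12(t-i)^n.$$ The eigenvalues of $H(T_n)$ (as a multiset) are $\sum_{k=1}^{(n-1)/2} 2\sin\frac{k(2j+1)\pi}{n}$, $j=0,\dots,n-1$, when $n$ is odd, and $(-1)^j+\sum_{k=1}^{(n-2)/2}2\sin\frac{k(2j+1)\pi}{n}$, $j=0,\dots,n-1$, when $n$ is even.
   Context: The transitive tournament $T_n$ has vertices $1,\dots,n$ and an arc $uv$ for every $u<v$. For a digraph $X$, the Hermitian adjacency matrix $H(X)$ has $(u,v)$-entry $1$ if $uv$ and $vu$ are arcs, $i$ if only $uv$ is an arc, $-i$ if only $vu$ is an arc, and $0$ otherwise. *)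

theory Defs
  imports Complex_Main "Jordan_Normal_Form.Char_Poly"
begin

(* A digraph on vertex set {1..n} is given by its arc relation arc u v ("uv is an arc").
   Hermitian adjacency matrix; matrix row/column index u (0-based) corresponds to vertex u+1. *)
definition herm_adj :: "nat \<Rightarrow> (nat \<Rightarrow> nat \<Rightarrow> bool) \<Rightarrow> complex mat" where
  "herm_adj n arc = mat n n (\<lambda>(u, v).
     if arc (u+1) (v+1) \<and> arc (v+1) (u+1) then 1
     else if arc (u+1) (v+1) then \<i>
     else if arc (v+1) (u+1) then - \<i>
     else 0)"

definition trans_tournament_arc :: "nat \<Rightarrow> nat \<Rightarrow> bool" where
  "trans_tournament_arc u v \<longleftrightarrow> u < v"

definition H_T :: "nat \<Rightarrow> complex mat" where
  "H_T n = herm_adj n trans_tournament_arc"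

end

theory Submission
  imports Defs
begin

text \<open>
  Let \<open>D\<^sub>m\<close> be the determinant of the \<open>m \<times> m\<close> matrix with \<open>t\<close> on the diagonal, \<open>a\<close> above and
  \<open>b\<close> below it. Laplace expansion along the last row gives \<open>D\<^sub>m\<^sub>+\<^sub>1 = b(t - a)\<^sup>m + (t - b)D\<^sub>m\<close>,
  hence \<open>(b - a)D\<^sub>n = b(t - a)\<^sup>n - a(t - b)\<^sup>n\<close>. The matrix \<open>tI - H(T\<^sub>n)\<close> has \<open>a = -i\<close>, \<open>b = i\<close>,
  so \<open>\<phi>(T\<^sub>n, t) = ((t + i)\<^sup>n + (t - i)\<^sup>n)/2\<close>; expanding both powers gives the coefficients.
  As \<open>cot \<phi> + i = e\<^sup>i\<^sup>\<phi>/sin \<phi>\<close> and \<open>cot \<phi> - i = e\<^sup>-\<^sup>i\<^sup>\<phi>/sin \<phi>\<close>, the value at \<open>cot \<phi>\<close> is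
  \<open>cos(n\<phi>)/sin\<^sup>n \<phi>\<close>, so the \<open>n\<close> distinct numbers \<open>cot((2j + 1)\<pi>/2n)\<close>, \<open>j < n\<close>, are all the roots.
  Finally \<open>(\<Sum>\<^sub>k\<^sub>\<le>\<^sub>m 2 sin(k\<theta>)) sin(\<theta>/2) = cos(\<theta>/2) - cos((m + 1/2)\<theta>)\<close> telescopes, and for
  \<open>\<theta> = (2j + 1)\<pi>/n\<close> the boundary term vanishes when \<open>n\<close> is odd and equals \<open>(-1)\<^sup>j sin(\<theta>/2)\<close>
  when \<open>n\<close> is even.
\<close>

definition diag_up_low_mat :: "nat \<Rightarrow> 'a \<Rightarrow> 'a \<Rightarrow> 'a \<Rightarrow> 'a::comm_ring_1 mat" where
  "diag_up_low_mat n t a b = mat n n (\<lambda>(i, j). if i = j then t else if i < j then a else b)"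

lemma diag_up_low_mat_carrier [simp]: "diag_up_low_mat n t a b \<in> carrier_mat n n"
  by (simp add: diag_up_low_mat_def)

lemma mat_delete_diag_up_low_mat_last:
  "mat_delete (diag_up_low_mat (Suc m) t a b) m m = diag_up_low_mat m t a b"
  by (rule eq_matI) (auto simp: diag_up_low_mat_def mat_delete_def)

lemma sum_two_nonzero_terms:
  fixes f :: "nat \<Rightarrow> 'a::comm_ring_1"
  assumes "i < N" "m < N" "i \<noteq> m"
  shows "(\<Sum>k<N. (if k = i then x else if k = m then y else 0) * f k) = x * f i + y * f m"
proof -
  have "(\<Sum>k<N. (if k = i then x else if k = m then y else 0) * f k)
      = (\<Sum>k<N. (if k = i then x * f i else 0) + (if k = m then y * f m else 0))"
    by (rule sum.cong) (use assms in auto)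
  also have "\<dots> = x * f i + y * f m"
    using assms by (simp add: sum.distrib)
  finally show ?thesis .
qed

lemma det_diag_up_low_mat_last_row_ones:
  fixes t a b :: "'a::comm_ring_1"
  shows "det (mat (Suc m) (Suc m)
      (\<lambda>(i, j). if i = m then 1 else if i = j then t else if i < j then a else b)) = (t - a) ^ m"
    (is "det ?A = _")
proof -
  \<comment> \<open>Subtracting \<open>a\<close> times the last row from every other row makes the matrix lower triangular.\<close>
  define E :: "'a mat" where
    "E = mat (Suc m) (Suc m) (\<lambda>(i, j). if i = j then 1 else if j = m then - a else 0)"
  have A: "?A \<in> carrier_mat (Suc m) (Suc m)" and E: "E \<in> carrier_mat (Suc m) (Suc m)"
    by (simp_all add: E_def)
  have det_E: "det E = 1"
    by (subst det_upper_triangular[OF _ E]) (auto simp: E_def upper_triangular_def prod_list_diag_prod)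
  have row_E: "(\<Sum>k<Suc m. E $$ (i, k) * f k) = (if i = m then f i else f i - a * f m)"
    if i: "i < Suc m" for i and f :: "nat \<Rightarrow> 'a"
  proof (cases "i = m")
    case True
    have "(\<Sum>k<Suc m. E $$ (i, k) * f k) = (\<Sum>k<Suc m. if k = i then f k else 0)"
      by (rule sum.cong) (use True in \<open>auto simp: E_def\<close>)
    then show ?thesis
      using True by simp
  next
    case False
    have "(\<Sum>k<Suc m. E $$ (i, k) * f k)
        = (\<Sum>k<Suc m. (if k = i then 1 else if k = m then - a else 0) * f k)"
      by (rule sum.cong) (use i False in \<open>auto simp: E_def\<close>)
    then show ?thesis
      using i False sum_two_nonzero_terms[of i "Suc m" m 1 "- a" f] by simp
  qed
  have EA: "(E * ?A) $$ (i, j) =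
      (if i = m then 1 else if j = i then t - a else if i < j then 0 else b - a)"
    if ij: "i < Suc m" "j < Suc m" for i j
    using ij E A row_E[of i "\<lambda>k. ?A $$ (k, j)"]
    by (auto simp: scalar_prod_def atLeast0LessThan)
  have EA_carrier: "E * ?A \<in> carrier_mat (Suc m) (Suc m)"
    using E A by simp
  have "det (E * ?A) = prod_list (diag_mat (E * ?A))"
    by (rule det_lower_triangular[OF _ EA_carrier]) (simp add: EA)
  also have "\<dots> = (\<Prod>i<Suc m. (E * ?A) $$ (i, i))"
    using E by (simp add: prod_list_diag_prod atLeast0LessThan)
  also have "\<dots> = (\<Prod>i<m. t - a) * 1"
    unfolding prod.lessThan_Suc by (intro arg_cong2[where f = "(*)"] prod.cong) (simp_all add: EA)
  finally show ?thesis
    using det_mult[OF E A] det_E by simp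
qed

lemma det_diag_up_low_mat_Suc:
  fixes t a b :: "'a::comm_ring_1"
  shows "det (diag_up_low_mat (Suc m) t a b) = b * (t - a) ^ m + (t - b) * det (diag_up_low_mat m t a b)"
proof -
  define A where "A = diag_up_low_mat (Suc m) t a b"
  \<comment> \<open>\<open>B\<close> agrees with \<open>A\<close> off the last row, so the last-row cofactors of \<open>A\<close> sum to \<open>det B\<close>.\<close>
  define B :: "'a mat" where
    "B = mat (Suc m) (Suc m) (\<lambda>(i, j). if i = m then 1 else if i = j then t else if i < j then a else b)"
  have A: "A \<in> carrier_mat (Suc m) (Suc m)" and B: "B \<in> carrier_mat (Suc m) (Suc m)"
    by (simp_all add: A_def B_def)
  have cofactor_A_B: "cofactor A m j = cofactor B m j" for j
  proof -
    have "mat_delete A m j = mat_delete B m j"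
      by (rule eq_matI) (auto simp: A_def B_def diag_up_low_mat_def mat_delete_def)
    then show ?thesis
      by (simp add: cofactor_def)
  qed
  have "det A = (\<Sum>j<Suc m. A $$ (m, j) * cofactor A m j)"
    by (rule laplace_expansion_row[OF A]) simp
  also have "\<dots> = (\<Sum>j<Suc m. b * cofactor B m j + (if j = m then (t - b) * cofactor A m m else 0))"
    by (rule sum.cong) (auto simp: A_def diag_up_low_mat_def cofactor_A_B[symmetric] algebra_simps)
  also have "\<dots> = b * (\<Sum>j<Suc m. cofactor B m j) + (t - b) * cofactor A m m"
    by (simp add: sum.distrib sum_distrib_left del: sum.lessThan_Suc)
  also have "(\<Sum>j<Suc m. cofactor B m j) = (\<Sum>j<Suc m. B $$ (m, j) * cofactor B m j)"
    by (rule sum.cong) (auto simp: B_def)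
  also have "(\<Sum>j<Suc m. B $$ (m, j) * cofactor B m j) = det B"
    by (rule laplace_expansion_row[OF B, symmetric]) simp
  also have "det B = (t - a) ^ m"
    unfolding B_def by (rule det_diag_up_low_mat_last_row_ones)
  also have "cofactor A m m = det (diag_up_low_mat m t a b)"
    by (simp add: cofactor_def A_def mat_delete_diag_up_low_mat_last)
  finally show ?thesis
    by (simp add: A_def)
qed

lemma det_diag_up_low_mat:
  fixes t a b :: "'a::comm_ring_1"
  shows "(b - a) * det (diag_up_low_mat n t a b) = b * (t - a) ^ n - a * (t - b) ^ n"
proof (induction n)
  case 0
  then show ?case
    by (simp add: diag_up_low_mat_def)
next
  case (Suc n)
  have "(b - a) * det (diag_up_low_mat (Suc n) t a b)
      = (b - a) * b * (t - a) ^ n + (t - b) * ((b - a) * det (diag_up_low_mat n t a b))"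
    by (simp add: det_diag_up_low_mat_Suc algebra_simps)
  also have "\<dots> = b * (t - a) ^ Suc n - a * (t - b) ^ Suc n"
    by (subst Suc.IH) (simp add: algebra_simps)
  finally show ?case .
qed

lemma char_poly_matrix_H_T: "char_poly_matrix (H_T n) = diag_up_low_mat n [:0, 1:] [:- \<i>:] [:\<i>:]"
  by (rule eq_matI)
    (auto simp: char_poly_matrix_def H_T_def herm_adj_def trans_tournament_arc_def diag_up_low_mat_def)

abbreviation half_sum_conj_powers :: "nat \<Rightarrow> complex poly" where
  "half_sum_conj_powers n \<equiv> Polynomial.smult (1/2) ([:\<i>, 1:] ^ n) + Polynomial.smult (1/2) ([:- \<i>, 1:] ^ n)"

lemma char_poly_H_T:
  "char_poly (H_T n) = half_sum_conj_powers n"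
proof -
  have det: "[:2 * \<i>:] * char_poly (H_T n) = [:\<i>:] * ([:\<i>, 1:] ^ n + [:- \<i>, 1:] ^ n)"
    using det_diag_up_low_mat[where t = "[:0, 1:]" and a = "[:- \<i>:]" and b = "[:\<i>:]"]
    by (simp add: char_poly_def char_poly_matrix_H_T algebra_simps)
  have "char_poly (H_T n) = Polynomial.smult (1 / (2 * \<i>)) ([:2 * \<i>:] * char_poly (H_T n))"
    by simp
  also have "\<dots> = Polynomial.smult (1/2) ([:\<i>, 1:] ^ n + [:- \<i>, 1:] ^ n)"
    unfolding det by simp
  finally show ?thesis
    by (simp add: smult_add_right)
qed

lemma coeff_half_sum_conj_powers:
  "coeff (half_sum_conj_powers n) d =
    (if d \<le> n \<and> even (n - d) then (-1) ^ ((n - d) div 2) * of_nat (n choose d) else 0)"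
proof (cases "d \<le> n")
  case True
  have coeff: "coeff (half_sum_conj_powers n) d
      = of_nat (n choose d) * (\<i> ^ (n - d) + (- \<i>) ^ (n - d)) / 2"
    using True by (simp add: coeff_linear_poly_power algebra_simps)
  show ?thesis
  proof (cases "even (n - d)")
    case True
    then obtain q where "n - d = 2 * q"
      by blast
    then show ?thesis
      unfolding coeff using \<open>d \<le> n\<close> by (simp add: power_mult)
  next
    case False
    then show ?thesis
      unfolding coeff by (simp add: power_minus_odd)
  qed
next
  case False
  then show ?thesis
    by (simp add: coeff_eq_0 order.strict_trans1[OF degree_power_le])
qed

lemma coeff_alternating_even_binomial_sum:
  "coeff (\<Sum>j = 0..n div 2. monom ((-1) ^ j * of_nat (n choose (2 * j))) (n - 2 * j) :: complex poly) d =
    (if d \<le> n \<and> even (n - d) then (-1) ^ ((n - d) div 2) * of_nat (n choose d) else 0)"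
proof (cases "d \<le> n \<and> even (n - d)")
  case True
  define q where "q = (n - d) div 2"
  have d: "d = n - 2 * q" "q \<le> n div 2"
    using True unfolding q_def by auto
  have "coeff (\<Sum>j = 0..n div 2. monom ((-1) ^ j * of_nat (n choose (2 * j))) (n - 2 * j) :: complex poly) d
      = (\<Sum>j = 0..n div 2. if j = q then (-1) ^ q * of_nat (n choose (2 * q)) else 0)"
    unfolding coeff_sum coeff_monom by (rule sum.cong) (use d in auto)
  also have "\<dots> = (-1) ^ q * of_nat (n choose d)"
    using d by (simp add: binomial_symmetric[of "2 * q" n])
  finally show ?thesis
    by (simp only: q_def True simp_thms if_True)
next
  case False
  then show ?thesis
    unfolding coeff_sum coeff_monom by (auto intro!: sum.neutral)
qed

lemma half_sum_conj_powers_eq_binomial_sum: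
  "half_sum_conj_powers n =
    (\<Sum>j = 0..n div 2. monom ((-1) ^ j * of_nat (n choose (2 * j))) (n - 2 * j))"
  by (rule poly_eqI) (simp only: coeff_half_sum_conj_powers coeff_alternating_even_binomial_sum)

lemma proots_eq_image_mset_if_distinct_roots:
  fixes p :: "'a::idom poly"
  assumes "p \<noteq> 0" "degree p = n" "inj_on f {0..<n}" "\<And>j. j < n \<Longrightarrow> poly p (f j) = 0"
  shows "proots p = image_mset f (mset [0..<n])"
proof -
  have roots: "image_mset f (mset [0..<n]) = mset_set (f ` {0..<n})"
    using assms(3) by (simp add: image_mset_mset_set)
  have sub: "image_mset f (mset [0..<n]) \<subseteq># proots p"
  proof (rule mset_subset_eqI)
    fix x
    show "count (image_mset f (mset [0..<n])) x \<le> count (proots p) x"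
      unfolding roots using assms(1,4)
      by (cases "x \<in> f ` {0..<n}") (auto simp: count_mset_set order_root Suc_le_eq)
  qed
  have "size (proots p) \<le> size (image_mset f (mset [0..<n]))"
    using size_proots_le[of p] assms(2) by simp
  then have "image_mset f (mset [0..<n]) = proots p"
    using sub mset_subset_size[of "image_mset f (mset [0..<n])" "proots p"]
    by (auto simp: subset_mset.less_le)
  then show ?thesis ..
qed

lemma poly_half_sum_conj_powers_cot:
  assumes "sin \<phi> \<noteq> 0"
  shows "poly (half_sum_conj_powers n)
      (complex_of_real (cot \<phi>)) = complex_of_real (cos (real n * \<phi>) / sin \<phi> ^ n)"
proof -
  define x where "x = complex_of_real (cot \<phi>)"
  have plus: "x + \<i> = cis \<phi> / complex_of_real (sin \<phi>)"
    and minus: "x + - \<i> = cis (- \<phi>) / complex_of_real (sin \<phi>)"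
    using assms by (simp_all add: complex_eq_iff x_def cot_def Re_divide Im_divide power2_eq_square)
  have "poly (half_sum_conj_powers n) x
      = ((x + \<i>) ^ n + (x + - \<i>) ^ n) / 2"
    by (simp add: poly_power algebra_simps)
  also have "\<dots> = (cis (real n * \<phi>) + cis (- (real n * \<phi>))) / 2 / complex_of_real (sin \<phi>) ^ n"
    unfolding plus minus power_divide DeMoivre by (simp add: add_divide_distrib mult.commute)
  also have "\<dots> = complex_of_real (cos (real n * \<phi>) / sin \<phi> ^ n)"
    by (simp add: complex_eq_iff)
  finally show ?thesis
    unfolding x_def .
qed

lemma cot_strict_antimono:
  assumes "0 < x" "x < y" "y < pi"
  shows "cot y < cot x"
proof -
  have sin_pos: "sin x > 0" "sin y > 0" "sin (y - x) > 0"
    using assms by (auto intro!: sin_gt_zero)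
  then have "cot x - cot y = sin (y - x) / (sin x * sin y)"
    by (simp add: cot_def sin_diff field_simps)
  also have "\<dots> > 0"
    using sin_pos by simp
  finally show ?thesis
    by simp
qed

lemma inj_on_cot: "inj_on cot {0<..<pi}"
proof (rule inj_onI)
  fix x y :: real
  assume "x \<in> {0<..<pi}" "y \<in> {0<..<pi}" "cot x = cot y"
  then show "x = y"
    using cot_strict_antimono[of x y] cot_strict_antimono[of y x] by (cases x y rule: linorder_cases) auto
qed

lemma sum_two_sin_mult_sin_half:
  "(\<Sum>k = 1..m. 2 * sin (real k * \<theta>)) * sin (\<theta> / 2) = cos (\<theta> / 2) - cos ((real m + 1/2) * \<theta>)"
proof (induction m)
  case 0
  then show ?case
    by simp
next
  case (Suc m)
  have "(real m + 1/2) * \<theta> = real (Suc m) * \<theta> - \<theta> / 2"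
    and "(real (Suc m) + 1/2) * \<theta> = real (Suc m) * \<theta> + \<theta> / 2"
    by (simp_all add: algebra_simps)
  then have "2 * sin (real (Suc m) * \<theta>) * sin (\<theta> / 2)
      = cos ((real m + 1/2) * \<theta>) - cos ((real (Suc m) + 1/2) * \<theta>)"
    by (simp add: cos_diff cos_add)
  then show ?case
    using Suc.IH by (simp add: distrib_right)
qed

lemma cot_half_eq_sum_two_sin:
  assumes "sin (\<theta> / 2) \<noteq> 0"
  shows "cot (\<theta> / 2) = (\<Sum>k = 1..m. 2 * sin (real k * \<theta>)) + cos ((real m + 1/2) * \<theta>) / sin (\<theta> / 2)"
  using sum_two_sin_mult_sin_half[of \<theta> m] assms by (simp add: cot_def field_simps)

definition root_angle :: "nat \<Rightarrow> nat \<Rightarrow> real" where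
  "root_angle n j = real (2 * j + 1) * pi / (2 * real n)"

lemma root_angle_bounds:
  assumes "j < n"
  shows "0 < root_angle n j" "root_angle n j < pi"
proof -
  have "real (2 * j + 1) * pi < 2 * real n * pi"
    using assms by (intro mult_strict_right_mono) auto
  then show "0 < root_angle n j" "root_angle n j < pi"
    using assms by (simp_all add: root_angle_def pos_divide_less_eq)
qed

lemma two_root_angle: "2 * root_angle n j = real (2 * j + 1) * pi / real n"
  by (simp add: root_angle_def)

lemma cos_mult_root_angle:
  assumes "0 < n"
  shows "cos (real n * root_angle n j) = 0"
proof -
  have "real n * root_angle n j = pi * real (Suc (2 * j)) / 2"
    using assms by (simp add: root_angle_def)
  then show ?thesis
    by (simp only: cos_pi_eq_zero)
qed

lemma sin_mult_root_angle:
  assumes "0 < n"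
  shows "sin (real n * root_angle n j) = (-1) ^ j"
proof -
  have "real n * root_angle n j = real (Suc (2 * j)) * pi / 2"
    using assms by (simp add: root_angle_def)
  then show ?thesis
    by (simp only: sin_cos_npi)
qed

lemma strict_mono_root_angle:
  assumes "0 < n"
  shows "strict_mono (root_angle n)"
  using assms by (intro strict_monoI) (simp add: root_angle_def divide_strict_right_mono)

lemma proots_char_poly_H_T:
  "proots (char_poly (H_T n)) = image_mset (\<lambda>j. complex_of_real (cot (root_angle n j))) (mset [0..<n])"
proof (rule proots_eq_image_mset_if_distinct_roots)
  have H_T: "H_T n \<in> carrier_mat n n"
    by (simp add: H_T_def herm_adj_def)
  show "char_poly (H_T n) \<noteq> 0" "degree (char_poly (H_T n)) = n"
    using degree_monic_char_poly[OF H_T] by auto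
  have "inj_on (root_angle n) {0..<n}"
    using strict_mono_root_angle[of n] by (cases "n = 0") (auto intro: strict_mono_imp_inj_on)
  then have "inj_on (cot \<circ> root_angle n) {0..<n}"
    using root_angle_bounds by (intro comp_inj_on inj_on_subset[OF inj_on_cot]) auto
  then show "inj_on (\<lambda>j. complex_of_real (cot (root_angle n j))) {0..<n}"
    by (auto simp: inj_on_def)
  show "poly (char_poly (H_T n)) (complex_of_real (cot (root_angle n j))) = 0" if "j < n" for j
  proof -
    have "sin (root_angle n j) \<noteq> 0"
      using root_angle_bounds[OF that] sin_gt_zero by force
    then have "poly (char_poly (H_T n)) (complex_of_real (cot (root_angle n j)))
        = complex_of_real (cos (real n * root_angle n j) / sin (root_angle n j) ^ n)"
      unfolding char_poly_H_T by (rule poly_half_sum_conj_powers_cot)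
    also have "\<dots> = 0"
      using that by (simp add: cos_mult_root_angle)
    finally show ?thesis .
  qed
qed

lemma sum_two_sin_eq_cot_root_angle:
  assumes "j < n"
  shows "(\<Sum>k = 1..m. 2 * sin (real (k * (2 * j + 1)) * pi / real n))
    = cot (root_angle n j) - cos ((real m + 1/2) * (2 * root_angle n j)) / sin (root_angle n j)"
proof -
  have "(\<Sum>k = 1..m. 2 * sin (real (k * (2 * j + 1)) * pi / real n))
      = (\<Sum>k = 1..m. 2 * sin (real k * (2 * root_angle n j)))"
    unfolding two_root_angle of_nat_mult by (simp only: mult.assoc times_divide_eq_right)
  moreover have "sin (root_angle n j) \<noteq> 0"
    using root_angle_bounds[OF assms] sin_gt_zero by force
  ultimately show ?thesis
    using cot_half_eq_sum_two_sin[of "2 * root_angle n j" m] by simp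
qed

lemma sum_two_sin_eq_cot_root_angle_odd:
  assumes "j < n" "odd n"
  shows "(\<Sum>k = 1..(n - 1) div 2. 2 * sin (real (k * (2 * j + 1)) * pi / real n)) = cot (root_angle n j)"
proof -
  obtain k where "n = 2 * k + 1"
    using assms(2) oddE by blast
  then have angle: "(real ((n - 1) div 2) + 1/2) * (2 * root_angle n j) = real n * root_angle n j"
    by (simp add: algebra_simps)
  show ?thesis
    using assms unfolding sum_two_sin_eq_cot_root_angle[OF assms(1)] angle
    by (simp add: cos_mult_root_angle)
qed

lemma sum_two_sin_eq_cot_root_angle_even:
  assumes "j < n" "even n"
  shows "(-1) ^ j + (\<Sum>k = 1..(n - 2) div 2. 2 * sin (real (k * (2 * j + 1)) * pi / real n))
    = cot (root_angle n j)"
proof -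
  obtain k where "n = 2 * Suc k"
    using assms by (cases "n div 2") auto
  then have angle: "(real ((n - 2) div 2) + 1/2) * (2 * root_angle n j) = real n * root_angle n j - root_angle n j"
    by (simp add: algebra_simps)
  have "sin (root_angle n j) \<noteq> 0"
    using root_angle_bounds[OF assms(1)] sin_gt_zero by force
  then show ?thesis
    using assms unfolding sum_two_sin_eq_cot_root_angle[OF assms(1)] angle
    by (simp add: cos_diff cos_mult_root_angle sin_mult_root_angle)
qed

theorem theorem10p5:
  fixes n :: nat
  shows "char_poly (H_T n) =
           (\<Sum>j = 0..n div 2. monom ((-1) ^ j * of_nat (n choose (2 * j))) (n - 2 * j))
    \<and> char_poly (H_T n) = Polynomial.smult (1/2) ([:\<i>, 1:] ^ n) + Polynomial.smult (1/2) ([:- \<i>, 1:] ^ n)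
    \<and> (odd n \<longrightarrow> proots (char_poly (H_T n)) =
           image_mset (\<lambda>j. complex_of_real
              (\<Sum>k = 1..(n - 1) div 2. 2 * sin (real (k * (2 * j + 1)) * pi / real n)))
             (mset [0..<n]))
    \<and> (even n \<longrightarrow> proots (char_poly (H_T n)) =
           image_mset (\<lambda>j. complex_of_real
              ((-1) ^ j + (\<Sum>k = 1..(n - 2) div 2. 2 * sin (real (k * (2 * j + 1)) * pi / real n))))
             (mset [0..<n]))"
proof (intro conjI impI)
  show "char_poly (H_T n) = half_sum_conj_powers n"
    by (rule char_poly_H_T)
  then show "char_poly (H_T n) = (\<Sum>j = 0..n div 2. monom ((-1) ^ j * of_nat (n choose (2 * j))) (n - 2 * j))"
    by (simp only: half_sum_conj_powers_eq_binomial_sum)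
  show "proots (char_poly (H_T n)) = image_mset (\<lambda>j. complex_of_real
      (\<Sum>k = 1..(n - 1) div 2. 2 * sin (real (k * (2 * j + 1)) * pi / real n))) (mset [0..<n])"
    if "odd n"
    unfolding proots_char_poly_H_T using that
    by (intro image_mset_cong) (simp only: set_mset_mset set_upt atLeastLessThan_iff simp_thms sum_two_sin_eq_cot_root_angle_odd)
  show "proots (char_poly (H_T n)) = image_mset (\<lambda>j. complex_of_real
      ((-1) ^ j + (\<Sum>k = 1..(n - 2) div 2. 2 * sin (real (k * (2 * j + 1)) * pi / real n)))) (mset [0..<n])"
    if "even n"
    unfolding proots_char_poly_H_T using that
    by (intro image_mset_cong) (simp only: set_mset_mset set_upt atLeastLessThan_iff simp_thms sum_two_sin_eq_cot_root_angle_even)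
qed

end
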